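(* Let $(G,\cdot)$ be a loop with identity $e$ and $(H,\cdot)$ a non-trivial subloop such that $(xs\cdot z)s=x(sz\cdot s)$ for all $x,z\in G$, $s\in H$. Then the following are equivalent: (a) $J_\rho$ is a second Smarandache semi-automorphism of $G_H$, i.e. $eJ_\rho=e$ and $(sy\cdot s)^\rho=(s^\rho\cdot y^\rho)s^\rho$ for all $y\in G$, $s\in H$; (b) $sy\cdot y^\rho=s$ for all $y\in G$ and $s\in H$.
   Context: Juxtaposition binds more tightly than $\cdot$. $x^\rho$ is the right inverse of $x$ ($xx^\rho=e$), and $J_\rho:G\to G$ is the map $x\mapsto x^\rho$. A second Smarandache semi-automorphism of $G_H$ is a bijection $T$ of $G$ with $HT=H$, $eT=e$ and $(sy\cdot s)T=(sT\cdot yT)sT$ for all $y\in G$, $s\in H$. *)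

theory Defs
  imports Main
begin

definition loop :: "'a set \<Rightarrow> ('a \<Rightarrow> 'a \<Rightarrow> 'a) \<Rightarrow> 'a \<Rightarrow> bool" where
  "loop G m e \<longleftrightarrow> e \<in> G \<and> (\<forall>x\<in>G. \<forall>y\<in>G. m x y \<in> G)
     \<and> (\<forall>x\<in>G. m e x = x \<and> m x e = x)
     \<and> (\<forall>a\<in>G. \<forall>b\<in>G. \<exists>!x. x \<in> G \<and> m a x = b)
     \<and> (\<forall>a\<in>G. \<forall>b\<in>G. \<exists>!y. y \<in> G \<and> m y a = b)"

definition subloop :: "'a set \<Rightarrow> 'a set \<Rightarrow> ('a \<Rightarrow> 'a \<Rightarrow> 'a) \<Rightarrow> 'a \<Rightarrow> bool" where
  "subloop H G m e \<longleftrightarrow> H \<subseteq> G \<and> loop H m e"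

definition rinv :: "'a set \<Rightarrow> ('a \<Rightarrow> 'a \<Rightarrow> 'a) \<Rightarrow> 'a \<Rightarrow> 'a \<Rightarrow> 'a" where
  "rinv G m e x = (THE y. y \<in> G \<and> m x y = e)"

definition second_S_semi_aut ::
  "'a set \<Rightarrow> 'a set \<Rightarrow> ('a \<Rightarrow> 'a \<Rightarrow> 'a) \<Rightarrow> 'a \<Rightarrow> ('a \<Rightarrow> 'a) \<Rightarrow> bool" where
  "second_S_semi_aut G H m e T \<longleftrightarrow> bij_betw T G G \<and> T ` H = H \<and> T e = e
     \<and> (\<forall>y\<in>G. \<forall>s\<in>H. T (m (m s y) s) = m (m (T s) (T y)) (T s))"

end

theory Submission
  imports Defs
begin

text \<open>Write \<open>y'\<close> for the right inverse. The identity with \<open>z = s'\<close> gives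
  \<open>(xs \<cdot> s')s = xs\<close>, hence the right inverse property \<open>xs \<cdot> s' = x\<close> for \<open>s \<in> H\<close>.
  Put \<open>w = sy \<cdot> s\<close>, so \<open>ws' = sy\<close>, and apply the identity to \<open>w, y', s'\<close>:
  \<open>(sy \<cdot> y')s' = w(s'y' \<cdot> s')\<close>. Since right inverses are unique, (a) at \<open>y, s\<close> says
  \<open>w(s'y' \<cdot> s') = e = ss'\<close>, which by right cancellation of \<open>s'\<close> is (b) at \<open>y, s\<close>.
  The remaining conditions on \<open>J\<^sub>\<rho>\<close> hold in every loop with a subloop.\<close>

locale loop_on =
  fixes G :: "'a set" and m :: "'a \<Rightarrow> 'a \<Rightarrow> 'a" and e :: 'a
  assumes loop: "loop G m e"
begin

lemma unit_closed: "e \<in> G"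
  and mult_closed: "x \<in> G \<Longrightarrow> y \<in> G \<Longrightarrow> m x y \<in> G"
  and left_unit: "x \<in> G \<Longrightarrow> m e x = x"
  and left_div_unique: "a \<in> G \<Longrightarrow> b \<in> G \<Longrightarrow> \<exists>!x. x \<in> G \<and> m a x = b"
  and right_div_unique: "a \<in> G \<Longrightarrow> b \<in> G \<Longrightarrow> \<exists>!y. y \<in> G \<and> m y a = b"
  using loop unfolding loop_def by simp_all

lemma left_cancel:
  assumes "a \<in> G" "b \<in> G" "c \<in> G" "m a b = m a c"
  shows "b = c"
  using left_div_unique[of a "m a c"] assms mult_closed by blast

lemma right_cancel:
  assumes "a \<in> G" "b \<in> G" "c \<in> G" "m b a = m c a"
  shows "b = c"
  using right_div_unique[of a "m c a"] assms mult_closed by blast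

lemma rinv_closed: "x \<in> G \<Longrightarrow> rinv G m e x \<in> G"
  and mult_rinv: "x \<in> G \<Longrightarrow> m x (rinv G m e x) = e"
  using theI'[OF left_div_unique[OF _ unit_closed]] unfolding rinv_def by blast+

lemma rinv_unique:
  assumes "x \<in> G" "y \<in> G" "m x y = e"
  shows "rinv G m e x = y"
  using left_cancel[of x "rinv G m e x" y] assms rinv_closed mult_rinv by simp

lemma rinv_unit: "rinv G m e e = e"
  using rinv_unique unit_closed left_unit by blast

lemma bij_betw_rinv: "bij_betw (rinv G m e) G G"
proof (rule bij_betwI')
  fix x y assume "x \<in> G" "y \<in> G"
  then show "(rinv G m e x = rinv G m e y) = (x = y)"
    using right_cancel[of "rinv G m e y" x y] mult_rinv rinv_closed by metis
next
  fix y assume "y \<in> G"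
  then obtain x where "x \<in> G" "m x y = e"
    using right_div_unique unit_closed by blast
  with \<open>y \<in> G\<close> show "\<exists>x\<in>G. y = rinv G m e x"
    using rinv_unique by metis
qed (rule rinv_closed)

lemma rinv_image_subloop:
  assumes "subloop H G m e"
  shows "rinv G m e ` H = H"
proof -
  interpret H: loop_on H m e
    using assms unfolding subloop_def by unfold_locales blast
  have "H \<subseteq> G"
    using assms unfolding subloop_def by blast
  then have "rinv G m e s = rinv H m e s" if "s \<in> H" for s
    using that rinv_unique H.rinv_closed H.mult_rinv by blast
  then show ?thesis
    using H.bij_betw_rinv unfolding bij_betw_def by (simp cong: image_cong)
qed

lemma second_S_semi_aut_rinv_iff:
  assumes H: "subloop H G m e"
  shows "second_S_semi_aut G H m e (rinv G m e) \<longleftrightarrow>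
    (\<forall>y\<in>G. \<forall>s\<in>H. rinv G m e (m (m s y) s) = m (m (rinv G m e s) (rinv G m e y)) (rinv G m e s))"
  unfolding second_S_semi_aut_def
  using bij_betw_rinv rinv_image_subloop[OF H] rinv_unit by blast

lemma right_inverse_property:
  assumes "x \<in> G" "s \<in> G"
    and identity: "m (m (m x s) (rinv G m e s)) s = m x (m (m s (rinv G m e s)) s)"
  shows "m (m x s) (rinv G m e s) = x"
proof (rule right_cancel[of s])
  show "m (m (m x s) (rinv G m e s)) s = m x s"
    using identity assms mult_rinv left_unit by simp
qed (use assms mult_closed rinv_closed in auto)

lemma rinv_semi_aut_law_iff:
  assumes y: "y \<in> G" and s: "s \<in> G"
    and identity: "\<And>x z. x \<in> G \<Longrightarrow> z \<in> G \<Longrightarrow> m (m (m x s) z) s = m x (m (m s z) s)"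
      "\<And>x z. x \<in> G \<Longrightarrow> z \<in> G \<Longrightarrow>
         m (m (m x (rinv G m e s)) z) (rinv G m e s)
           = m x (m (m (rinv G m e s) z) (rinv G m e s))"
  shows "rinv G m e (m (m s y) s) = m (m (rinv G m e s) (rinv G m e y)) (rinv G m e s)
    \<longleftrightarrow> m (m s y) (rinv G m e y) = s"
proof -
  let ?s' = "rinv G m e s" and ?y' = "rinv G m e y"
  define w where "w = m (m s y) s"
  define X where "X = m (m ?s' ?y') ?s'"
  have closed: "w \<in> G" "X \<in> G" "?y' \<in> G" "m s y \<in> G"
    unfolding w_def X_def by (simp_all add: mult_closed rinv_closed y s)
  have "m w ?s' = m s y"
    unfolding w_def
    using right_inverse_property[OF closed(4) s identity(1)[OF closed(4) rinv_closed[OF s]]] .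
  then have expand: "m (m (m s y) ?y') ?s' = m w X"
    unfolding X_def using identity(2)[OF closed(1) closed(3)] by simp
  have "rinv G m e w = X \<longleftrightarrow> m w X = e"
    using rinv_unique[OF closed(1,2)] mult_rinv[OF closed(1)] by auto
  also have "\<dots> \<longleftrightarrow> m (m (m s y) ?y') ?s' = m s ?s'"
    using expand mult_rinv[OF s] by simp
  also have "\<dots> \<longleftrightarrow> m (m s y) ?y' = s"
    using right_cancel[OF rinv_closed[OF s] mult_closed[OF closed(4,3)] s] by auto
  finally show ?thesis
    unfolding w_def X_def .
qed

end

text \<open>The hypotheses \<open>H \<noteq> {e}\<close> and \<open>H \<noteq> G\<close> only exclude degenerate cases; the equivalence
  holds without them.\<close>

theorem theorem3p5:
  fixes G H :: "'a set" and m :: "'a \<Rightarrow> 'a \<Rightarrow> 'a" and e :: 'a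
  assumes "loop G m e"
    and "subloop H G m e"
    and "H \<noteq> {e}" and "H \<noteq> G"
    and "\<forall>x\<in>G. \<forall>z\<in>G. \<forall>s\<in>H. m (m (m x s) z) s = m x (m (m s z) s)"
  shows "second_S_semi_aut G H m e (rinv G m e) \<longleftrightarrow>
         (\<forall>y\<in>G. \<forall>s\<in>H. m (m s y) (rinv G m e y) = s)"
proof -
  interpret loop_on G m e
    by (rule loop_on.intro) fact
  have HG: "H \<subseteq> G"
    using assms(2) unfolding subloop_def by blast
  have "rinv G m e s \<in> H" if "s \<in> H" for s
    using rinv_image_subloop[OF assms(2)] that by blast
  then have "rinv G m e (m (m s y) s) = m (m (rinv G m e s) (rinv G m e y)) (rinv G m e s)
      \<longleftrightarrow> m (m s y) (rinv G m e y) = s" if "y \<in> G" "s \<in> H" for y s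
    using rinv_semi_aut_law_iff that HG assms(5) by blast
  then show ?thesis
    using second_S_semi_aut_rinv_iff[OF assms(2)] by blast
qed

end
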